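(* In the Setting below, let $I$ be an $\mathfrak n$-primary ideal of $S$. Then $$g(I)+1\le \ell_S(S/I)+2\delta.$$
   Context: Setting: $(S,\mathfrak n)$ is a one-dimensional Noetherian local domain, not regular, with infinite residue field $k$ and quotient field $K$; its integral closure $\overline S$ in $K$ is a DVR and a finite $S$-module, with uniformizer $t$, and $S/\mathfrak n\to\overline S/t\overline S$ is an isomorphism. $\mathrm{Val}$ is the valuation of $\overline S$ on $K$ with $\mathrm{Val}(t)=1$. $\delta=\ell_S(\overline S/S)$. $g(I)=\max\{\mathrm{Val}(a)\mid a\in K\setminus I,\ a\neq0\}$. *)

theory Defs
  imports "HOL-Computational_Algebra.Polynomial" "HOL-Library.Extended_Real"
begin

text \<open>The quotient field K is modelled as the whole type 'a (a field); the ring S is a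
subring of it, given as a set. Ideals of S and S-submodules of K are subsets of 'a.\<close>

definition subring :: "'a::field set \<Rightarrow> bool" where
  "subring S \<longleftrightarrow> 0 \<in> S \<and> 1 \<in> S \<and> (\<forall>x\<in>S. \<forall>y\<in>S. x + y \<in> S \<and> x - y \<in> S \<and> x * y \<in> S)"

definition submod :: "'a::field set \<Rightarrow> 'a set \<Rightarrow> bool" where
  "submod S M \<longleftrightarrow> 0 \<in> M \<and> (\<forall>x\<in>M. \<forall>y\<in>M. x + y \<in> M) \<and> (\<forall>s\<in>S. \<forall>x\<in>M. s * x \<in> M)"

definition s_ideal :: "'a::field set \<Rightarrow> 'a set \<Rightarrow> bool" where
  "s_ideal S I \<longleftrightarrow> I \<subseteq> S \<and> submod S I"

definition s_span :: "'a::field set \<Rightarrow> 'a set \<Rightarrow> 'a set" where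
  "s_span S F = {x. \<exists>c. (\<forall>f\<in>F. c f \<in> S) \<and> x = (\<Sum>f\<in>F. c f * f)}"

definition noetherian :: "'a::field set \<Rightarrow> bool" where
  "noetherian S \<longleftrightarrow> (\<forall>I. s_ideal S I \<longrightarrow> (\<exists>F. finite F \<and> F \<subseteq> S \<and> I = s_span S F))"

definition prime_ideal :: "'a::field set \<Rightarrow> 'a set \<Rightarrow> bool" where
  "prime_ideal S P \<longleftrightarrow> s_ideal S P \<and> P \<noteq> S \<and>
     (\<forall>x\<in>S. \<forall>y\<in>S. x * y \<in> P \<longrightarrow> x \<in> P \<or> y \<in> P)"

definition local_ring :: "'a::field set \<Rightarrow> 'a set \<Rightarrow> bool" where
  "local_ring S n \<longleftrightarrow> s_ideal S n \<and> n \<noteq> S \<and> (\<forall>J. s_ideal S J \<and> J \<noteq> S \<longrightarrow> J \<subseteq> n)"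

definition krull_dim :: "'a::field set \<Rightarrow> enat" where
  "krull_dim S = Sup {enat k | k. \<exists>P::nat \<Rightarrow> 'a set.
      (\<forall>i\<le>k. prime_ideal S (P i)) \<and> (\<forall>i<k. P i \<subset> P (Suc i))}"

definition regular_local :: "'a::field set \<Rightarrow> 'a set \<Rightarrow> bool" where
  "regular_local S n \<longleftrightarrow> (\<exists>F. finite F \<and> F \<subseteq> S \<and> enat (card F) = krull_dim S \<and> n = s_span S F)"

definition is_quotient_field :: "'a::field set \<Rightarrow> bool" where
  "is_quotient_field S \<longleftrightarrow> (\<forall>x. \<exists>a\<in>S. \<exists>b\<in>S. b \<noteq> 0 \<and> x = a / b)"

definition integral_closure :: "'a::field set \<Rightarrow> 'a set" where
  "integral_closure S = {x. \<exists>p::'a poly. lead_coeff p = 1 \<and> (\<forall>i. coeff p i \<in> S) \<and> poly p x = 0}"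

text \<open>A discrete (integer-valued) valuation on K; the value at 0 is irrelevant.\<close>
definition discrete_valuation :: "('a::field \<Rightarrow> int) \<Rightarrow> bool" where
  "discrete_valuation v \<longleftrightarrow>
     (\<forall>x y. x \<noteq> 0 \<longrightarrow> y \<noteq> 0 \<longrightarrow> v (x * y) = v x + v y) \<and>
     (\<forall>x y. x \<noteq> 0 \<longrightarrow> y \<noteq> 0 \<longrightarrow> x + y \<noteq> 0 \<longrightarrow> v (x + y) \<ge> min (v x) (v y)) \<and>
     (\<forall>k. \<exists>x. x \<noteq> 0 \<and> v x = k)"

definition valuation_ring :: "('a::field \<Rightarrow> int) \<Rightarrow> 'a set" where
  "valuation_ring v = {x. x = 0 \<or> v x \<ge> 0}"

text \<open>Length of the S-module N/M, for S-submodules M \<subseteq> N of K: supremum of lengths of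
strict chains of S-submodules from M to N.\<close>
definition mod_length :: "'a::field set \<Rightarrow> 'a set \<Rightarrow> 'a set \<Rightarrow> enat" where
  "mod_length S N M = Sup {enat k | k. \<exists>C::nat \<Rightarrow> 'a set. C 0 = M \<and> C k = N \<and>
      (\<forall>i\<le>k. submod S (C i)) \<and> (\<forall>i<k. C i \<subset> C (Suc i))}"

definition primary_to :: "'a::field set \<Rightarrow> 'a set \<Rightarrow> 'a set \<Rightarrow> bool" where
  "primary_to S n I \<longleftrightarrow> s_ideal S I \<and> I \<noteq> S \<and>
     (\<forall>x\<in>S. \<forall>y\<in>S. x * y \<in> I \<longrightarrow> x \<notin> I \<longrightarrow> (\<exists>k. y ^ k \<in> I)) \<and>
     {x \<in> S. \<exists>k. x ^ k \<in> I} = n"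

definition g_inv :: "('a::field \<Rightarrow> int) \<Rightarrow> 'a set \<Rightarrow> int" where
  "g_inv Val I = (GREATEST m. \<exists>a. a \<notin> I \<and> a \<noteq> 0 \<and> Val a = m)"

end

theory Submission
  imports Defs "HOL-Library.Set_Algebras"
begin

(* Let g = g(I), attained by some a not in I, and count the integers 0..g: H are the values
   of elements of S, G the remaining ones (the gaps of the value semigroup, i.e. values of
   the integral closure S' not taken by S), and V the values of elements of I.  Filtering
   by value, every k in H - V gives a composition factor of S/I and every gap one of S'/S,
   so |H - V| <= l(S/I) and |G| <= delta.  Conversely, if k is a value of I then g - k is a
   gap: otherwise some s*i with s in S, i in I has the value of a, and since S/n = S'/tS'
   the unit a/(s*i) is congruent to an element of S modulo t, which puts a into I (every
   element of value > g lies in I).  Hence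
     g + 1 = |H| + |G| <= |H - V| + |V| + |G| <= l(S/I) + 2 delta.
   That g is finite at all follows from a conductor argument. *)

lemma valuation_mult:
  "discrete_valuation v \<Longrightarrow> x \<noteq> 0 \<Longrightarrow> y \<noteq> 0 \<Longrightarrow> v (x * y) = v x + v y"
  unfolding discrete_valuation_def by blast

lemma valuation_add:
  "discrete_valuation v \<Longrightarrow> x \<noteq> 0 \<Longrightarrow> y \<noteq> 0 \<Longrightarrow> x + y \<noteq> 0 \<Longrightarrow> min (v x) (v y) \<le> v (x + y)"
  unfolding discrete_valuation_def by blast

lemma valuation_one: "discrete_valuation v \<Longrightarrow> v 1 = 0"
  using valuation_mult[of v 1 1] by simp

lemma valuation_minus:
  assumes v: "discrete_valuation v" and "x \<noteq> 0"
  shows "v (- x) = v x"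
proof -
  have "v (-1) + v (-1) = 0"
    using valuation_mult[OF v, of "-1" "-1"] valuation_one[OF v] by simp
  then show ?thesis
    using valuation_mult[OF v, of "-1" x] \<open>x \<noteq> 0\<close> by simp
qed

lemma valuation_power:
  assumes "discrete_valuation v" "x \<noteq> 0"
  shows "v (x ^ k) = int k * v x"
  by (induction k) (simp_all add: valuation_one valuation_mult assms algebra_simps)

lemma valuation_divide:
  assumes v: "discrete_valuation v" and "x \<noteq> 0" "y \<noteq> 0"
  shows "v (x / y) = v x - v y"
  using valuation_mult[OF v, of "x / y" y] assms by simp

lemma valuation_diff_eq_left:
  assumes v: "discrete_valuation v" and "x \<noteq> 0" "y \<noteq> 0" "v x < v y"
  shows "x - y \<noteq> 0 \<and> v (x - y) = v x"
proof -
  have "x - y \<noteq> 0"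
    using assms by auto
  moreover have "min (v x) (v y) \<le> v (x - y)"
    using valuation_add[OF v \<open>x \<noteq> 0\<close>, of "- y"] valuation_minus[OF v \<open>y \<noteq> 0\<close>] assms calculation
    by simp
  moreover have "min (v (x - y)) (v y) \<le> v x"
    using valuation_add[OF v \<open>x - y \<noteq> 0\<close> \<open>y \<noteq> 0\<close>] assms by simp
  ultimately show ?thesis
    using assms by linarith
qed

definition value_ge :: "('a::field \<Rightarrow> int) \<Rightarrow> int \<Rightarrow> 'a set" where
  "value_ge v k = {x. x = 0 \<or> k \<le> v x}"

definition value_set :: "('a::field \<Rightarrow> int) \<Rightarrow> 'a set \<Rightarrow> nat set" where
  "value_set v M = {k. \<exists>x\<in>M. x \<noteq> 0 \<and> v x = int k}"

lemma valuation_ring_eq_value_ge: "valuation_ring v = value_ge v 0"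
  unfolding valuation_ring_def value_ge_def by simp

lemma value_set_valuation_ring:
  assumes "discrete_valuation v"
  shows "value_set v (valuation_ring v) = UNIV"
proof -
  have "k \<in> value_set v (valuation_ring v)" for k
  proof -
    obtain x where "x \<noteq> 0" "v x = int k"
      using assms unfolding discrete_valuation_def by blast
    moreover have "x \<in> valuation_ring v"
      using \<open>v x = int k\<close> unfolding valuation_ring_def by simp
    ultimately show ?thesis
      unfolding value_set_def by blast
  qed
  then show ?thesis
    by blast
qed

lemma value_set_mono: "M \<subseteq> N \<Longrightarrow> value_set v M \<subseteq> value_set v N"
  unfolding value_set_def by blast

lemma subring_sum: "subring S \<Longrightarrow> (\<And>x. x \<in> A \<Longrightarrow> f x \<in> S) \<Longrightarrow> sum f A \<in> S"
  by (induction A rule: infinite_finite_induct) (auto simp: subring_def)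

lemma subring_prod: "subring S \<Longrightarrow> (\<And>x. x \<in> A \<Longrightarrow> f x \<in> S) \<Longrightarrow> prod f A \<in> S"
  by (induction A rule: infinite_finite_induct) (auto simp: subring_def)

lemma subring_subset_integral_closure:
  assumes "subring S"
  shows "S \<subseteq> integral_closure S"
proof
  fix x assume "x \<in> S"
  then have "- x \<in> S"
    using assms unfolding subring_def by (metis diff_0)
  then have "coeff [:- x, 1:] i \<in> S" for i
    using assms by (cases i) (auto simp: subring_def coeff_pCons split: nat.split)
  then show "x \<in> integral_closure S"
    unfolding integral_closure_def by (intro CollectI exI[of _ "[:- x, 1:]"]) simp
qed

lemma submod_subring: "subring S \<Longrightarrow> submod S S"
  unfolding subring_def submod_def by blast

lemma submod_Int: "submod S A \<Longrightarrow> submod S B \<Longrightarrow> submod S (A \<inter> B)"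
  unfolding submod_def by blast

lemma submod_set_plus:
  assumes A: "submod S A" and B: "submod S B"
  shows "submod S (A + B)"
  unfolding submod_def
proof (intro conjI ballI)
  show "0 \<in> A + B"
    using A B set_plus_intro[of 0 A 0 B] unfolding submod_def by simp
next
  fix x y assume "x \<in> A + B" "y \<in> A + B"
  then obtain a b a' b' where "x = a + b" "y = a' + b'" "a \<in> A" "b \<in> B" "a' \<in> A" "b' \<in> B"
    by (auto elim!: set_plus_elim)
  moreover have "x + y = (a + a') + (b + b')"
    using calculation by (simp add: algebra_simps)
  ultimately show "x + y \<in> A + B"
    using A B unfolding submod_def by (metis set_plus_intro)
next
  fix s x assume "s \<in> S" "x \<in> A + B"
  then obtain a b where "x = a + b" "a \<in> A" "b \<in> B"
    by (auto elim!: set_plus_elim)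
  moreover have "s * x = s * a + s * b"
    using calculation by (simp add: algebra_simps)
  ultimately show "s * x \<in> A + B"
    using A B \<open>s \<in> S\<close> unfolding submod_def by (metis set_plus_intro)
qed

lemma submod_value_ge:
  assumes v: "discrete_valuation v" and S: "S \<subseteq> valuation_ring v"
  shows "submod S (value_ge v k)"
  unfolding submod_def
proof (intro conjI ballI)
  fix x y assume "x \<in> value_ge v k" "y \<in> value_ge v k"
  then show "x + y \<in> value_ge v k"
    using valuation_add[OF v, of x y] unfolding value_ge_def
    by (cases "x = 0"; cases "y = 0"; cases "x + y = 0") auto
next
  fix s x assume "s \<in> S" "x \<in> value_ge v k"
  then show "s * x \<in> value_ge v k"
    using valuation_mult[OF v, of s x] S unfolding value_ge_def valuation_ring_def
    by (cases "s = 0"; cases "x = 0") auto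
qed (simp add: value_ge_def)

lemma strict_chain_of_decreasing:
  fixes M :: "nat \<Rightarrow> 'a::field set"
  assumes "\<And>k. k < K \<Longrightarrow> M (Suc k) \<subseteq> M k" and "\<And>k. k \<le> K \<Longrightarrow> submod S (M k)"
  shows "\<exists>C. C 0 = M K \<and> C (card {k. k < K \<and> M (Suc k) \<noteq> M k}) = M 0 \<and>
    (\<forall>i\<le>card {k. k < K \<and> M (Suc k) \<noteq> M k}. submod S (C i)) \<and>
    (\<forall>i<card {k. k < K \<and> M (Suc k) \<noteq> M k}. C i \<subset> C (Suc i))"
  using assms
proof (induction K)
  case 0
  then show ?case
    by (intro exI[of _ "\<lambda>_. M 0"]) auto
next
  case (Suc K)
  define n where "n = card {k. k < K \<and> M (Suc k) \<noteq> M k}"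
  have "\<And>k. k < K \<Longrightarrow> M (Suc k) \<subseteq> M k" "\<And>k. k \<le> K \<Longrightarrow> submod S (M k)"
    using Suc.prems by simp_all
  then obtain C where C: "C 0 = M K" "C n = M 0" "\<forall>i\<le>n. submod S (C i)" "\<forall>i<n. C i \<subset> C (Suc i)"
    using Suc.IH unfolding n_def by blast
  show ?case
  proof (cases "M (Suc K) = M K")
    case True
    then have "{k. k < Suc K \<and> M (Suc k) \<noteq> M k} = {k. k < K \<and> M (Suc k) \<noteq> M k}"
      using less_Suc_eq by auto
    then show ?thesis
      using C True unfolding n_def by auto
  next
    case False
    then have "{k. k < Suc K \<and> M (Suc k) \<noteq> M k} = insert K {k. k < K \<and> M (Suc k) \<noteq> M k}"
      using less_Suc_eq by auto
    then have card_Suc: "card {k. k < Suc K \<and> M (Suc k) \<noteq> M k} = Suc n"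
      unfolding n_def by simp
    define C' where "C' i = (if i = 0 then M (Suc K) else C (i - 1))" for i
    have "\<forall>i\<le>Suc n. submod S (C' i)"
      using C(3) Suc.prems(2) unfolding C'_def by (simp add: le_diff_conv)
    moreover have "\<forall>i<Suc n. C' i \<subset> C' (Suc i)"
    proof (intro allI impI)
      fix i assume "i < Suc n"
      then show "C' i \<subset> C' (Suc i)"
        using Suc.prems(1)[of K] False C(1,4) unfolding C'_def by (cases i) fastforce+
    qed
    moreover have "C' 0 = M (Suc K)" "C' (Suc n) = M 0"
      using C(2) by (simp_all add: C'_def)
    ultimately show ?thesis
      using card_Suc by metis
  qed
qed

lemma card_strict_steps_le_mod_length:
  fixes M :: "nat \<Rightarrow> 'a::field set"
  assumes "\<And>k. k < K \<Longrightarrow> M (Suc k) \<subseteq> M k" and "\<And>k. k \<le> K \<Longrightarrow> submod S (M k)"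
  shows "enat (card {k. k < K \<and> M (Suc k) \<noteq> M k}) \<le> mod_length S (M 0) (M K)"
  using strict_chain_of_decreasing[of K M S] assms unfolding mod_length_def
  by (intro Sup_upper) blast

lemma card_value_set_diff_le_mod_length:
  assumes v: "discrete_valuation v" and S: "S \<subseteq> valuation_ring v"
    and A: "submod S A" and B: "submod S B" and "A \<subseteq> B" and B_val: "B \<subseteq> valuation_ring v"
  shows "enat (card ({..<K} \<inter> (value_set v B - value_set v A))) \<le> mod_length S B A"
proof (cases "K = 0")
  case True
  then show ?thesis
    by (simp flip: zero_enat_def)
next
  case False
  define M where "M k = (if k < K then A + (B \<inter> value_ge v (int k)) else A)" for k
  have "0 \<in> A" "0 \<in> B"
    using A B unfolding submod_def by auto
  have A_sub: "A \<subseteq> A + C" if "0 \<in> C" for C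
    using that by (metis add.right_neutral set_plus_intro subsetI)
  have zero_value_ge: "0 \<in> value_ge v k" for k
    unfolding value_ge_def by simp
  have M_dec: "M (Suc k) \<subseteq> M k" if "k < K" for k
  proof (cases "Suc k < K")
    case True
    have "B \<inter> value_ge v (int (Suc k)) \<subseteq> B \<inter> value_ge v (int k)"
      unfolding value_ge_def by auto
    from set_plus_mono2[OF order_refl this] show ?thesis
      using True that unfolding M_def by simp
  qed (use that A_sub \<open>0 \<in> B\<close> zero_value_ge in \<open>simp add: M_def\<close>)
  have M_submod: "submod S (M k)" for k
    unfolding M_def using A B submod_value_ge[OF v S] by (simp add: submod_set_plus submod_Int)
  have M_next: "M (Suc k) \<subseteq> A + value_ge v (int (Suc k))" for k
    using A_sub[OF zero_value_ge] unfolding M_def by (simp add: set_plus_mono2)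
  have "M 0 = B"
  proof -
    have "A + B \<subseteq> B"
      using B \<open>A \<subseteq> B\<close> unfolding submod_def by (auto elim!: set_plus_elim)
    moreover have "B \<subseteq> A + B"
      using set_zero_plus2[OF \<open>0 \<in> A\<close>] .
    moreover have "B \<inter> value_ge v 0 = B"
      using B_val valuation_ring_eq_value_ge by auto
    ultimately show ?thesis
      using False unfolding M_def by auto
  qed
  moreover have "M K = A"
    unfolding M_def by simp
  moreover have "{..<K} \<inter> (value_set v B - value_set v A) \<subseteq> {k. k < K \<and> M (Suc k) \<noteq> M k}"
  proof
    fix k assume k: "k \<in> {..<K} \<inter> (value_set v B - value_set v A)"
    then obtain x where x: "x \<in> B" "x \<noteq> 0" "v x = int k"
      unfolding value_set_def by auto
    have "x \<in> M k"
      using k x set_plus_intro[OF \<open>0 \<in> A\<close>, of x] unfolding M_def value_ge_def by auto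
    moreover have "x \<notin> M (Suc k)"
    proof
      assume "x \<in> M (Suc k)"
      then obtain a y where "x = a + y" "a \<in> A" "y \<in> value_ge v (int (Suc k))"
        using M_next[of k] by (blast elim: set_plus_elim)
      then have "a \<noteq> 0 \<and> v a = int k"
        using valuation_diff_eq_left[OF v \<open>x \<noteq> 0\<close>, of y] x unfolding value_ge_def
        by (cases "y = 0") (auto simp: algebra_simps)
      then show False
        using k \<open>a \<in> A\<close> unfolding value_set_def by auto
    qed
    ultimately show "k \<in> {k. k < K \<and> M (Suc k) \<noteq> M k}"
      using k by auto
  qed
  then have "card ({..<K} \<inter> (value_set v B - value_set v A)) \<le> card {k. k < K \<and> M (Suc k) \<noteq> M k}"
    by (intro card_mono) auto
  ultimately show ?thesis
    using card_strict_steps_le_mod_length[of K M S] M_dec M_submod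
    by (metis (no_types, lifting) enat_ord_simps(1) order.trans)
qed

lemma common_denominator:
  assumes S: "subring S" and qf: "is_quotient_field S" and "finite F"
  shows "\<exists>d\<in>S. d \<noteq> 0 \<and> (\<forall>y\<in>s_span S F. d * y \<in> S)"
proof -
  have "\<forall>x. \<exists>b. b \<in> S \<and> b \<noteq> 0 \<and> b * x \<in> S"
  proof
    fix x
    obtain a b where "a \<in> S" "b \<in> S" "b \<noteq> 0" "x = a / b"
      using qf unfolding is_quotient_field_def by blast
    then show "\<exists>b. b \<in> S \<and> b \<noteq> 0 \<and> b * x \<in> S"
      by (intro exI[of _ b]) simp
  qed
  then obtain den where den: "\<And>x. den x \<in> S" "\<And>x. den x \<noteq> 0" "\<And>x. den x * x \<in> S"
    by metis
  define d where "d = (\<Prod>f\<in>F. den f)"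
  have d_mult: "d * f \<in> S" if "f \<in> F" for f
  proof -
    have "d = den f * (\<Prod>f'\<in>F - {f}. den f')"
      unfolding d_def using \<open>finite F\<close> that by (simp add: prod.remove)
    then have "d * f = (den f * f) * (\<Prod>f'\<in>F - {f}. den f')"
      by (simp add: algebra_simps)
    also have "\<dots> \<in> S"
      using S den subring_prod[OF S, of "F - {f}" den] unfolding subring_def by blast
    finally show ?thesis .
  qed
  have "d * y \<in> S" if y: "y \<in> s_span S F" for y
  proof -
    obtain c where c: "\<forall>f\<in>F. c f \<in> S" "y = (\<Sum>f\<in>F. c f * f)"
      using y unfolding s_span_def by blast
    have "d * y = (\<Sum>f\<in>F. c f * (d * f))"
      unfolding c(2) by (simp add: sum_distrib_left algebra_simps)
    then show ?thesis
      using S c(1) d_mult subring_sum[OF S, of F "\<lambda>f. c f * (d * f)"] unfolding subring_def by simp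
  qed
  moreover have "d \<in> S"
    unfolding d_def by (rule subring_prod[OF S den(1)])
  moreover have "d \<noteq> 0"
    unfolding d_def using den(2) \<open>finite F\<close> by simp
  ultimately show ?thesis
    by blast
qed

lemma conductor_exists:
  assumes S: "subring S" and qf: "is_quotient_field S" and v: "discrete_valuation v"
    and closure: "integral_closure S = valuation_ring v"
    and fin: "finite F" "integral_closure S = s_span S F"
  shows "\<exists>c. value_ge v c \<subseteq> S"
proof -
  obtain d where d: "d \<noteq> 0" "\<And>y. y \<in> valuation_ring v \<Longrightarrow> d * y \<in> S"
    using common_denominator[OF S qf fin(1)] closure fin(2) by auto
  have "b \<in> S" if "b \<in> value_ge v (v d)" for b
  proof (cases "b = 0")
    case True
    then show ?thesis
      using S unfolding subring_def by simp
  next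
    case False
    then have "b / d \<in> valuation_ring v"
      using that valuation_divide[OF v False d(1)] unfolding value_ge_def valuation_ring_def by simp
    then show ?thesis
      using d by fastforce
  qed
  then show ?thesis
    by blast
qed

lemma primary_ideal_contains_value_ge:
  assumes v: "discrete_valuation v" and t: "t \<noteq> 0" "v t = 1"
    and maximal: "S \<inter> (*) t ` valuation_ring v = n" and I: "primary_to S n I"
    and conductor: "value_ge v c \<subseteq> S"
  shows "\<exists>N. value_ge v N \<subseteq> I"
proof -
  have val_t_power: "v (t ^ k) = int k" for k
    using valuation_power[OF v t(1)] t(2) by simp
  define m where "m = Suc (nat c)"
  have "c \<le> v (t ^ m)"
    unfolding val_t_power m_def by simp
  then have "t ^ m \<in> S"
    using conductor unfolding value_ge_def by blast
  moreover have "t ^ nat c \<in> valuation_ring v"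
    using val_t_power[of "nat c"] unfolding valuation_ring_def by simp
  then have "t ^ m \<in> (*) t ` valuation_ring v"
    unfolding m_def by (metis image_eqI power_Suc)
  ultimately obtain k where "(t ^ m) ^ k \<in> I"
    using I maximal unfolding primary_to_def by blast
  then have t_e: "t ^ (m * k) \<in> I"
    by (simp add: power_mult)
  have "b \<in> I" if "b \<in> value_ge v (int (m * k) + c)" for b
  proof (cases "b = 0")
    case True
    then show ?thesis
      using I unfolding primary_to_def s_ideal_def submod_def by simp
  next
    case False
    then have "b / t ^ (m * k) \<in> S"
      using that conductor valuation_divide[OF v False, of "t ^ (m * k)"] t(1) val_t_power
      unfolding value_ge_def by auto
    then have "b / t ^ (m * k) * t ^ (m * k) \<in> I"
      using I t_e unfolding primary_to_def s_ideal_def submod_def by blast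
    then show ?thesis
      using t(1) by simp
  qed
  then show ?thesis
    by blast
qed

lemma Greatest_int_bounded:
  fixes P :: "int \<Rightarrow> bool"
  assumes "P m" and bounded: "\<And>k. P k \<Longrightarrow> k \<le> N"
  shows "P (GREATEST k. P k) \<and> (\<forall>k. P k \<longrightarrow> k \<le> (GREATEST k. P k))"
proof -
  define Q where "Q = {k. P k \<and> m \<le> k}"
  have "finite Q"
    by (rule finite_subset[of _ "{m..N}"]) (auto simp: Q_def bounded)
  moreover have "m \<in> Q"
    using \<open>P m\<close> by (simp add: Q_def)
  ultimately have "Max Q \<in> Q" "m \<le> Max Q"
    by (auto intro: Max_in Max_ge)
  then have "P (Max Q)" "\<And>k. P k \<Longrightarrow> k \<le> Max Q"
    using Max_ge[OF \<open>finite Q\<close>] unfolding Q_def by fastforce+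
  moreover from this have "(GREATEST k. P k) = Max Q"
    by (rule Greatest_equality)
  ultimately show ?thesis
    by simp
qed

lemma g_inv_greatest:
  assumes "a0 \<notin> I" "a0 \<noteq> 0" and "value_ge v N \<subseteq> I"
  shows "\<exists>a. a \<notin> I \<and> a \<noteq> 0 \<and> v a = g_inv v I"
    and "\<And>a. a \<notin> I \<Longrightarrow> a \<noteq> 0 \<Longrightarrow> v a \<le> g_inv v I"
proof -
  have "(\<exists>a. a \<notin> I \<and> a \<noteq> 0 \<and> v a = k) \<Longrightarrow> k \<le> N" for k
    using assms(3) unfolding value_ge_def
    by (metis (mono_tags) mem_Collect_eq not_le order_less_imp_le subsetD)
  from Greatest_int_bounded[where P = "\<lambda>k. \<exists>a. a \<notin> I \<and> a \<noteq> 0 \<and> v a = k", OF _ this]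
  show "\<exists>a. a \<notin> I \<and> a \<noteq> 0 \<and> v a = g_inv v I" "\<And>a. a \<notin> I \<Longrightarrow> a \<noteq> 0 \<Longrightarrow> v a \<le> g_inv v I"
    using assms(1,2) unfolding g_inv_def by blast+
qed

lemma value_mult_ne_maximal_nonmember:
  assumes v: "discrete_valuation v" and t: "t \<noteq> 0" "v t = 1"
    and residue: "\<forall>y\<in>valuation_ring v. \<exists>x\<in>S. y - x \<in> (*) t ` valuation_ring v"
    and I: "s_ideal S I" and a: "a \<notin> I" "a \<noteq> 0" and above: "value_ge v (v a + 1) \<subseteq> I"
    and s: "s \<in> S" "s \<noteq> 0" and i: "i \<in> I" "i \<noteq> 0"
  shows "v s + v i \<noteq> v a"
proof
  assume sum: "v s + v i = v a"
  have si: "s * i \<noteq> 0" "v (s * i) = v a" "s * i \<in> I"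
    using s i sum valuation_mult[OF v s(2) i(2)] I unfolding s_ideal_def submod_def by auto
  have "v (a / (s * i)) = 0"
    using valuation_divide[OF v a(2) si(1)] si(2) by simp
  then have "a / (s * i) \<in> valuation_ring v"
    unfolding valuation_ring_def by simp
  then obtain x where x: "x \<in> S" and "a / (s * i) - x \<in> (*) t ` valuation_ring v"
    using residue by blast
  then obtain w where w: "w \<in> valuation_ring v" "a / (s * i) - x = t * w"
    by blast
  have "a = x * (s * i) + (t * w) * (s * i)"
    using w(2) si(1) by (simp add: field_simps)
  moreover have "x * (s * i) \<in> I"
    using I x si(3) unfolding s_ideal_def submod_def by blast
  moreover have "(t * w) * (s * i) \<in> value_ge v (v a + 1)"
  proof (cases "w = 0")
    case False
    then have "v ((t * w) * (s * i)) = 1 + v w + v a"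
      using valuation_mult[OF v] t si(1,2) by simp
    then show ?thesis
      using w(1) False unfolding valuation_ring_def value_ge_def by simp
  qed (simp add: value_ge_def)
  ultimately have "a \<in> I"
    using I above unfolding s_ideal_def submod_def by (metis subsetD)
  then show False
    using a(1) by contradiction
qed

lemma card_ideal_values_le_card_gaps:
  assumes v: "discrete_valuation v" and t: "t \<noteq> 0" "v t = 1"
    and residue: "\<forall>y\<in>valuation_ring v. \<exists>x\<in>S. y - x \<in> (*) t ` valuation_ring v"
    and I: "s_ideal S I" and a: "a \<notin> I" "a \<noteq> 0" "v a = int g"
    and above: "value_ge v (v a + 1) \<subseteq> I"
  shows "card ({..g} \<inter> value_set v I) \<le> card ({..g} - value_set v S)"
proof (rule card_inj_on_le)
  show "inj_on (\<lambda>k. g - k) ({..g} \<inter> value_set v I)"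
    by (rule inj_onI) auto
  show "(\<lambda>k. g - k) ` ({..g} \<inter> value_set v I) \<subseteq> {..g} - value_set v S"
  proof
    fix x assume "x \<in> (\<lambda>k. g - k) ` ({..g} \<inter> value_set v I)"
    then obtain k where k: "k \<le> g" "k \<in> value_set v I" "x = g - k"
      by auto
    have "g - k \<notin> value_set v S"
    proof
      assume "g - k \<in> value_set v S"
      then obtain i s where "i \<in> I" "i \<noteq> 0" "v i = int k" "s \<in> S" "s \<noteq> 0" "v s = int (g - k)"
        using k(2) unfolding value_set_def by blast
      then show False
        using value_mult_ne_maximal_nonmember[OF v t residue I a(1,2) above, of s i] k(1) a(3) by simp
    qed
    then show "x \<in> {..g} - value_set v S"
      using k by simp
  qed
qed simp

lemma card_atMost_le_diff_plus_twice_gaps: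
  fixes X Y :: "nat set"
  assumes "Y \<subseteq> X" and "card ({..g} \<inter> Y) \<le> card ({..g} - X)"
  shows "g + 1 \<le> card ({..g} \<inter> (X - Y)) + 2 * card ({..g} - X)"
proof -
  have "{..g} \<inter> X \<inter> Y = {..g} \<inter> Y" "{..g} \<inter> X - Y = {..g} \<inter> (X - Y)"
    using assms(1) by auto
  then have "card ({..g} \<inter> X) = card ({..g} \<inter> Y) + card ({..g} \<inter> (X - Y))"
    using card_Int_Diff[of "{..g} \<inter> X" Y] by simp
  moreover have "g + 1 = card ({..g} \<inter> X) + card ({..g} - X)"
    using card_Int_Diff[of "{..g}" X] by simp
  ultimately show ?thesis
    using assms(2) by simp
qed

lemma one_notin_proper_ideal:
  assumes "s_ideal S I" "I \<noteq> S"
  shows "1 \<notin> I"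
proof
  assume "1 \<in> I"
  then have "S \<subseteq> I"
    using assms(1) unfolding s_ideal_def submod_def by (metis mult.right_neutral subsetI)
  then show False
    using assms unfolding s_ideal_def by blast
qed

lemma g_inv_attained:
  assumes S: "subring S" and qf: "is_quotient_field S" and v: "discrete_valuation v"
    and closure: "integral_closure S = valuation_ring v"
    and fin: "finite F" "integral_closure S = s_span S F"
    and t: "t \<noteq> 0" "v t = 1" and maximal: "S \<inter> (*) t ` valuation_ring v = n"
    and I: "primary_to S n I"
  shows "\<exists>a. a \<notin> I \<and> a \<noteq> 0 \<and> v a = g_inv v I"
    and "0 \<le> g_inv v I"
    and "value_ge v (g_inv v I + 1) \<subseteq> I"
proof -
  have "s_ideal S I" "I \<noteq> S"
    using I unfolding primary_to_def by auto
  then have "1 \<notin> I"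
    by (rule one_notin_proper_ideal)
  obtain c where "value_ge v c \<subseteq> S"
    using conductor_exists[OF S qf v closure fin] by blast
  then obtain N where "value_ge v N \<subseteq> I"
    using primary_ideal_contains_value_ge[OF v t maximal I] by blast
  note greatest = g_inv_greatest[OF \<open>1 \<notin> I\<close> one_neq_zero this]
  show "\<exists>a. a \<notin> I \<and> a \<noteq> 0 \<and> v a = g_inv v I"
    by (fact greatest(1))
  show "0 \<le> g_inv v I"
    using greatest(2)[OF \<open>1 \<notin> I\<close> one_neq_zero] valuation_one[OF v] by simp
  show "value_ge v (g_inv v I + 1) \<subseteq> I"
  proof
    fix b assume "b \<in> value_ge v (g_inv v I + 1)"
    then show "b \<in> I"
      using greatest(2)[of b] I unfolding value_ge_def primary_to_def s_ideal_def submod_def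
      by (cases "b = 0") auto
  qed
qed

lemma card_gaps_le_mod_length:
  assumes v: "discrete_valuation v" and S: "subring S" "S \<subseteq> valuation_ring v"
  shows "enat (card ({..g} - value_set v S)) \<le> mod_length S (valuation_ring v) S"
proof -
  have "submod S (valuation_ring v)"
    unfolding valuation_ring_eq_value_ge by (rule submod_value_ge[OF v S(2)])
  from card_value_set_diff_le_mod_length[OF v S(2) submod_subring[OF S(1)] this S(2) order_refl,
      of "Suc g"]
  show ?thesis
    unfolding lessThan_Suc_atMost value_set_valuation_ring[OF v] by (simp add: Diff_eq)
qed

lemma ereal_of_enat_linear_bound:
  assumes "n \<le> a + 2 * b" and "enat a \<le> x" and "enat b \<le> y"
  shows "ereal (real n) \<le> ereal_of_enat x + 2 * ereal_of_enat y"
proof -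
  have "ereal (real n) \<le> ereal_of_enat (enat a) + 2 * ereal_of_enat (enat b)"
    using assms(1) by simp
  also have "\<dots> \<le> ereal_of_enat x + 2 * ereal_of_enat y"
  proof (rule add_mono)
    show "ereal_of_enat (enat a) \<le> ereal_of_enat x"
      using assms(2) by (simp only: ereal_of_enat_le_iff)
    have "ereal_of_enat (enat b) \<le> ereal_of_enat y"
      using assms(3) by (simp only: ereal_of_enat_le_iff)
    then show "2 * ereal_of_enat (enat b) \<le> 2 * ereal_of_enat y"
      by (rule ereal_mult_left_mono) simp
  qed
  finally show ?thesis .
qed

theorem theorem4p8:
  fixes S n I :: "'a::field set" and Val :: "'a \<Rightarrow> int" and t :: 'a
  assumes subring: "subring S"
    and qf: "is_quotient_field S"
    and noeth: "noetherian S"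
    and local: "local_ring S n"
    and dim1: "krull_dim S = 1"
    and not_regular: "\<not> regular_local S n"
    and infinite_residue: "infinite ((\<lambda>x. (+) x ` n) ` S)"
    and val: "discrete_valuation Val"
    and dvr: "integral_closure S = valuation_ring Val"
    and finite_mod: "\<exists>F. finite F \<and> F \<subseteq> integral_closure S \<and>
                       integral_closure S = s_span S F"
    and unif: "t \<noteq> 0" "Val t = 1"
    and residue_iso: "S \<inter> (*) t ` integral_closure S = n"
        "\<forall>y\<in>integral_closure S. \<exists>x\<in>S. y - x \<in> (*) t ` integral_closure S"
    and primary: "primary_to S n I"
  shows "ereal (of_int (g_inv Val I) + 1)
           \<le> ereal_of_enat (mod_length S S I) + 2 * ereal_of_enat (mod_length S (integral_closure S) S)"
proof -
  obtain F where F: "finite F" "integral_closure S = s_span S F"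
    using finite_mod by blast
  have S_val: "S \<subseteq> valuation_ring Val"
    using subring_subset_integral_closure[OF subring] dvr by simp
  have I: "s_ideal S I" "I \<subseteq> S" "submod S I"
    using primary unfolding primary_to_def s_ideal_def by simp_all
  have maximal: "S \<inter> (*) t ` valuation_ring Val = n"
    using residue_iso(1) unfolding dvr .
  note g_inv = g_inv_attained[OF subring qf val dvr F unif maximal primary]
  obtain a where a: "a \<notin> I" "a \<noteq> 0" "Val a = g_inv Val I"
    using g_inv(1) by blast
  define g where "g = nat (g_inv Val I)"
  have g: "g_inv Val I = int g"
    using g_inv(2) unfolding g_def by simp
  have "card ({..g} \<inter> value_set Val I) \<le> card ({..g} - value_set Val S)"
    using card_ideal_values_le_card_gaps[OF val unif _ I(1) a(1,2)] residue_iso(2) g_inv(3) a(3) g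
    unfolding dvr by simp
  from card_atMost_le_diff_plus_twice_gaps[OF value_set_mono[OF I(2)] this]
  have "g + 1 \<le> card ({..g} \<inter> (value_set Val S - value_set Val I)) + 2 * card ({..g} - value_set Val S)" .
  moreover have "enat (card ({..g} \<inter> (value_set Val S - value_set Val I))) \<le> mod_length S S I"
    using card_value_set_diff_le_mod_length[OF val S_val I(3) submod_subring[OF subring] I(2) S_val,
        of "Suc g"]
    unfolding lessThan_Suc_atMost .
  moreover have "enat (card ({..g} - value_set Val S)) \<le> mod_length S (integral_closure S) S"
    using card_gaps_le_mod_length[OF val subring S_val] unfolding dvr .
  ultimately have "ereal (real (g + 1))
      \<le> ereal_of_enat (mod_length S S I) + 2 * ereal_of_enat (mod_length S (integral_closure S) S)"
    by (rule ereal_of_enat_linear_bound)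
  then show ?thesis
    using g by (simp add: add.commute)
qed

end
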